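(* Let $F(u):=\tilde{\mathcal E}_0(u)/\zeta(u)-E$, a formal power series in $u$ with operator coefficients, written $F(u)=\sum_{k\ge1}F_ku^k$. Then, as formal series in $z$: (i) $\mathcal D^{(p)}(z)=F(z)=\tilde{\mathcal E}_0(z)/\zeta(z)-E$; (ii) $\mathcal D^{(h)}(z)=\exp\Big(\sum_{k\ge1}F_k\,\big(z^2\tfrac{d}{dz}\big)^k(\log z)\Big)$ (written in the paper as $z^{F(z^2 d/dz)}$); (iii) $\mathcal D^{(\sigma)}(z)=\exp\Big(-\sum_{k\ge1}F_k\,\big(-z^2\tfrac{d}{dz}\big)^k(\log z)\Big)$ (written as $z^{-F(-z^2d/dz)}$). Moreover $\mathcal D^{(h)}(z)=\mathcal D^{(\sigma)}(-z)^{-1}$.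
   Context: $V_0$ is the charge-zero semi-infinite wedge space with basis $v_\lambda=z^{\lambda_1}\wedge z^{\lambda_2-1}\wedge z^{\lambda_3-2}\wedge\cdots$ indexed by all partitions $\lambda$. The energy operator is $E v_\lambda=|\lambda|v_\lambda$. With $\zeta(u)=e^{u/2}-e^{-u/2}$, the Casimir operator is $\tilde{\mathcal E}_0(u)v_\lambda=\sum_{i\ge1}\big(e^{u(\lambda_i-i+\frac12)}-e^{u(-i+\frac12)}\big)v_\lambda$. For $\lambda\vdash n$, $\mathsf{cr}^\lambda$ is the vector of contents (column index minus row index) of the $n$ boxes of $\lambda$. $p_k,h_k,\sigma_k$ denote power sums, complete homogeneous and elementary symmetric polynomials. The operators $\mathcal D^{(p)},\mathcal D^{(h)},\mathcal D^{(\sigma)}$ are diagonal in the basis $v_\lambda$: $\mathcal D^{(p)}(z)v_\lambda=\sum_{k\ge1}\frac{z^k}{k!}p_k(\mathsf{cr}^\lambda)v_\lambda$, $\mathcal D^{(h)}(z)v_\lambda=\sum_{k\ge0}z^kh_k(\mathsf{cr}^\lambda)v_\lambda$, $\mathcal D^{(\sigma)}(z)v_\lambda=\sum_{k\ge0}z^k\sigma_k(\mathsf{cr}^\lambda)v_\lambda$. *)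

theory Defs
  imports "HOL-Computational_Algebra.Formal_Power_Series" "HOL-Library.Multiset"
begin

text \<open>Partitions: lists of positive integers in weakly decreasing order.
  lambda_i (1-indexed) is xs!(i-1) for i \<le> length xs and 0 otherwise.\<close>

definition is_partition :: "nat list \<Rightarrow> bool" where
  "is_partition xs \<longleftrightarrow> sorted (rev xs) \<and> 0 \<notin> set xs"

definition part_nth :: "nat list \<Rightarrow> nat \<Rightarrow> nat" where
  "part_nth xs i = (if 1 \<le> i \<and> i \<le> length xs then xs ! (i - 1) else 0)"

definition boxes :: "nat list \<Rightarrow> (nat \<times> nat) set" where
  "boxes xs = {(i, j). 1 \<le> i \<and> 1 \<le> j \<and> j \<le> part_nth xs i}"

definition content :: "nat \<times> nat \<Rightarrow> real" where
  "content b = real (snd b) - real (fst b)"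

text \<open>Symmetric functions evaluated at the content vector (indexed by boxes).\<close>

definition p_cr :: "nat list \<Rightarrow> nat \<Rightarrow> real" where
  "p_cr xs k = (\<Sum>b\<in>boxes xs. content b ^ k)"

definition h_cr :: "nat list \<Rightarrow> nat \<Rightarrow> real" where
  "h_cr xs k = (\<Sum>M\<in>{M. set_mset M \<subseteq> boxes xs \<and> size M = k}. \<Prod>b\<in>#M. content b)"

definition sigma_cr :: "nat list \<Rightarrow> nat \<Rightarrow> real" where
  "sigma_cr xs k = (\<Sum>S\<in>{S. S \<subseteq> boxes xs \<and> card S = k}. \<Prod>b\<in>S. content b)"

text \<open>Eigenvalues on v_lambda of the diagonal operators (as formal power series).\<close>

definition energy :: "nat list \<Rightarrow> real" where
  "energy xs = real (sum_list xs)"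

definition zeta_fps :: "real fps" where
  "zeta_fps = fps_exp (1/2) - fps_exp (-(1/2))"

definition casimir0 :: "nat list \<Rightarrow> real fps" where
  "casimir0 xs = (\<Sum>i\<in>{1..length xs}.
      fps_exp (real (part_nth xs i) - real i + 1/2) - fps_exp (- real i + 1/2))"

definition F_ser :: "nat list \<Rightarrow> real fps" where
  "F_ser xs = casimir0 xs / zeta_fps - fps_const (energy xs)"

definition Dp :: "nat list \<Rightarrow> real fps" where
  "Dp xs = Abs_fps (\<lambda>k. if k = 0 then 0 else p_cr xs k / fact k)"

definition Dh :: "nat list \<Rightarrow> real fps" where
  "Dh xs = Abs_fps (\<lambda>k. h_cr xs k)"

definition Dsigma :: "nat list \<Rightarrow> real fps" where
  "Dsigma xs = Abs_fps (\<lambda>k. sigma_cr xs k)"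

text \<open>The derivation c z^2 d/dz on formal power series, and
  (c z^2 d/dz)^k (log z) for k \<ge> 1, using (c z^2 d/dz)(log z) = c z.\<close>

definition zdz :: "real \<Rightarrow> real fps \<Rightarrow> real fps" where
  "zdz c f = fps_const c * fps_X ^ 2 * fps_deriv f"

definition zdz_pow_log :: "real \<Rightarrow> nat \<Rightarrow> real fps" where
  "zdz_pow_log c k = (zdz c ^^ (k - 1)) (fps_const c * fps_X)"

text \<open>Coefficientwise infinite sum of a sequence of power series with
  subdegree of the k-th term at least k (which holds in our uses).\<close>

definition fps_series :: "(nat \<Rightarrow> real fps) \<Rightarrow> real fps" where
  "fps_series a = Abs_fps (\<lambda>n. \<Sum>k\<le>n. fps_nth (a k) n)"

text \<open>exp of a power series with zero constant term.\<close>

definition fps_expf :: "real fps \<Rightarrow> real fps" where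
  "fps_expf g = fps_exp 1 oo g"

end

theory Submission
  imports Defs
begin

text \<open>Let z_b denote the contents of the boxes. Along the i-th row the Casimir eigenvalue
  telescopes, zeta(u) * (SUM j = 1..lambda_i. e^(u(j - i))) = e^(u(lambda_i - i + 1/2)) - e^(u(1/2 - i)),
  so F(u) = SUM_b (e^(u z_b) - 1) and F_k = p_k / k!. Since (c z^2 d/dz)^k log z = c^k (k-1)! z^k,
  the exponent in (ii) is SUM_b SUM_k (z_b z)^k / k = - SUM_b log(1 - z_b z) and the one in (iii)
  is SUM_b log(1 + z_b z). Exponentiating gives PROD_b 1/(1 - z_b z) and PROD_b (1 + z_b z), the
  generating functions of the complete and the elementary symmetric functions of the contents.\<close>

unbundle fps_syntax

lemma fps_ode_unique:
  fixes A B g :: "real fps"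
  assumes "fps_deriv A = A * g" "fps_deriv B = B * g" "A $ 0 = B $ 0"
  shows "A = B"
proof -
  have "(A - B) $ n = 0" for n
  proof (induction n rule: less_induct)
    case (less n)
    show ?case
    proof (cases n)
      case 0 then show ?thesis using assms(3) by simp
    next
      case (Suc m)
      have "of_nat n * (A - B) $ n = fps_deriv (A - B) $ m"
        using Suc by (simp add: algebra_simps)
      also have "\<dots> = ((A - B) * g) $ m"
        using assms(1,2) by (simp add: algebra_simps)
      also have "\<dots> = 0"
        using less Suc by (simp add: fps_mult_nth)
      finally show ?thesis using Suc by simp
    qed
  qed
  then show ?thesis by (simp add: fps_eq_iff)
qed

lemma fps_deriv_expf:
  "g $ 0 = 0 \<Longrightarrow> fps_deriv (fps_expf g) = fps_expf g * fps_deriv g"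
  unfolding fps_expf_def by (simp add: fps_compose_deriv)

lemma fps_expf_nth_0 [simp]: "fps_expf g $ 0 = 1"
  unfolding fps_expf_def by simp

lemma fps_expf_0 [simp]: "fps_expf 0 = 1"
  by (rule fps_ode_unique[where g = 0]) (simp_all add: fps_deriv_expf)

lemma fps_expf_add:
  assumes "g $ 0 = 0" "h $ 0 = 0"
  shows "fps_expf (g + h) = fps_expf g * fps_expf h"
  by (rule fps_ode_unique[where g = "fps_deriv (g + h)"])
     (use assms in \<open>simp_all add: fps_deriv_expf algebra_simps\<close>)

lemma fps_expf_sum:
  assumes "\<And>b. b \<in> S \<Longrightarrow> f b $ 0 = 0"
  shows "fps_expf (\<Sum>b\<in>S. f b) = (\<Prod>b\<in>S. fps_expf (f b))"
  using assms
proof (induction S rule: infinite_finite_induct)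
  case (insert a S)
  then show ?case by (simp add: fps_expf_add fps_sum_nth)
qed simp_all

lemma fps_expf_uminus:
  "g $ 0 = 0 \<Longrightarrow> fps_expf (- g) * fps_expf g = 1"
  by (metis add.left_inverse fps_expf_0 fps_expf_add neg_equal_0_iff_equal fps_neg_nth)

lemma fps_expf_ln_linear:
  "fps_expf (fps_ln 1 oo (fps_const c * fps_X)) = 1 + fps_const c * fps_X"
proof -
  have exp1: "fps_exp (1::real) oo fps_ln 1 = 1 + fps_X"
  proof -
    have "fps_exp 1 oo fps_ln 1 = ((fps_exp 1 - 1) + 1) oo fps_inv (fps_exp (1::real) - 1)"
      by (simp add: fps_ln_fps_exp_inv)
    also have "\<dots> = fps_X + 1"
      by (simp only: fps_compose_add_distrib fps_compose_1) (simp add: fps_inv_right)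
    finally show ?thesis by simp
  qed
  have "fps_expf (fps_ln 1 oo (fps_const c * fps_X)) = (1 + fps_X) oo (fps_const c * fps_X)"
    unfolding fps_expf_def by (simp add: fps_compose_assoc exp1)
  also have "\<dots> = 1 + fps_const c * fps_X"
    by (simp add: fps_compose_add_distrib)
  finally show ?thesis .
qed

lemma fps_expf_neg_ln_linear:
  "fps_expf (- (fps_ln 1 oo (fps_const (- a) * fps_X))) * (1 - fps_const a * fps_X) = 1"
proof -
  have "1 + fps_const (- a) * fps_X = 1 - fps_const a * fps_X"
    by (simp flip: fps_const_neg)
  moreover have "fps_expf (- (fps_ln 1 oo (fps_const (- a) * fps_X)))
      * fps_expf (fps_ln 1 oo (fps_const (- a) * fps_X)) = 1"
    by (rule fps_expf_uminus) simp
  ultimately show ?thesis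
    unfolding fps_expf_ln_linear by simp
qed

lemma fps_ln_linear_nth:
  "(fps_ln 1 oo (fps_const a * fps_X)) $ Suc n = - ((- a) ^ Suc n) / real (Suc n)"
  by (simp add: fps_compose_linear fps_ln_nth flip: power_mult_distrib)

lemma fps_const_prod: "fps_const (\<Prod>b\<in>S. f b) = (\<Prod>b\<in>S. fps_const (f b))"
  by (induction S rule: infinite_finite_induct) (simp_all flip: fps_const_mult)

lemma one_plus_linear_compose_uminus:
  "(1 + fps_const (a :: real) * fps_X) oo - fps_X = 1 - fps_const a * fps_X"
  by (simp add: fps_compose_add_distrib fps_compose_mult_distrib)

lemma fps_deriv_monom:
  "fps_deriv (fps_const (a :: real) * fps_X ^ Suc k) = fps_const (a * of_nat (Suc k)) * fps_X ^ k"
  by (simp only: fps_eq_iff fps_deriv_nth fps_mult_left_const_nth fps_X_power_nth)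
     (auto simp: algebra_simps)

lemma fps_series_monomials: "fps_series (\<lambda>k. fps_const (f k) * fps_X ^ k) = Abs_fps f"
  by (simp add: fps_series_def fps_eq_iff fps_X_power_mult_nth if_distrib sum.delta' cong: if_cong)

definition complete_hom :: "('a \<Rightarrow> real) \<Rightarrow> 'a set \<Rightarrow> nat \<Rightarrow> real" where
  "complete_hom w B k = (\<Sum>M\<in>{M. set_mset M \<subseteq> B \<and> size M = k}. \<Prod>b\<in>#M. w b)"

definition elem_sym :: "('a \<Rightarrow> real) \<Rightarrow> 'a set \<Rightarrow> nat \<Rightarrow> real" where
  "elem_sym w B k = (\<Sum>S\<in>{S. S \<subseteq> B \<and> card S = k}. \<Prod>b\<in>S. w b)"

lemma complete_hom_0 [simp]: "complete_hom w B 0 = 1"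
proof -
  have "{M. set_mset M \<subseteq> B \<and> size M = 0} = {{#}}" by auto
  then show ?thesis by (simp add: complete_hom_def)
qed

lemma complete_hom_empty_Suc [simp]: "complete_hom w {} (Suc k) = 0"
  by (simp add: complete_hom_def)

lemma multisets_of_size_insert:
  "{M. set_mset M \<subseteq> insert a B \<and> size M = Suc k}
     = {M. set_mset M \<subseteq> B \<and> size M = Suc k}
       \<union> add_mset a ` {M. set_mset M \<subseteq> insert a B \<and> size M = k}"
proof (intro equalityI subsetI)
  fix M assume M: "M \<in> {M. set_mset M \<subseteq> insert a B \<and> size M = Suc k}"
  show "M \<in> {M. set_mset M \<subseteq> B \<and> size M = Suc k}
       \<union> add_mset a ` {M. set_mset M \<subseteq> insert a B \<and> size M = k}"
  proof (cases "a \<in># M")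
    case True
    then have "M = add_mset a (M - {#a#})" by simp
    moreover have "set_mset (M - {#a#}) \<subseteq> insert a B" "size (M - {#a#}) = k"
      using M True by (auto simp: size_Diff_singleton dest: in_diffD)
    ultimately show ?thesis by blast
  next
    case False then show ?thesis using M by auto
  qed
qed auto

lemma complete_hom_insert:
  assumes "finite B" "a \<notin> B"
  shows "complete_hom w (insert a B) (Suc k) = complete_hom w B (Suc k) + w a * complete_hom w (insert a B) k"
proof -
  have fin: "finite {M. set_mset M \<subseteq> C \<and> size M = n}" if "finite C" for C :: "'a set" and n
    using finite_multisets_of_size[OF that, of n] by (simp add: multisets_of_size_def)
  have "(\<Sum>M\<in>add_mset a ` {M. set_mset M \<subseteq> insert a B \<and> size M = k}. \<Prod>b\<in>#M. w b)
      = w a * complete_hom w (insert a B) k"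
    by (subst sum.reindex) (auto simp: inj_on_def complete_hom_def sum_distrib_left)
  moreover have "{M. set_mset M \<subseteq> B \<and> size M = Suc k}
      \<inter> add_mset a ` {M. set_mset M \<subseteq> insert a B \<and> size M = k} = {}"
    using assms(2) by auto
  ultimately show ?thesis
    using assms(1) fin unfolding complete_hom_def multisets_of_size_insert
    by (simp add: sum.union_disjoint)
qed

lemma complete_hom_fps:
  "finite B \<Longrightarrow> Abs_fps (complete_hom w B) * (\<Prod>b\<in>B. 1 - fps_const (w b) * fps_X) = 1"
proof (induction B rule: finite_induct)
  case empty
  have "Abs_fps (complete_hom w {}) $ n = (1 :: real fps) $ n" for n
    by (cases n) simp_all
  then show ?case by (simp add: fps_eq_iff)
next
  case (insert a B)
  have "Abs_fps (complete_hom w (insert a B)) * (1 - fps_const (w a) * fps_X)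
      = Abs_fps (complete_hom w B)"
  proof (rule fps_ext)
    fix n
    have "Abs_fps (complete_hom w (insert a B)) * (1 - fps_const (w a) * fps_X) =
       Abs_fps (complete_hom w (insert a B)) - fps_const (w a) * (fps_X * Abs_fps (complete_hom w (insert a B)))"
      by (simp add: algebra_simps)
    then show "(Abs_fps (complete_hom w (insert a B)) * (1 - fps_const (w a) * fps_X)) $ n
        = Abs_fps (complete_hom w B) $ n"
      by (cases n) (simp_all add: complete_hom_insert insert.hyps fps_X_mult_nth)
  qed
  with insert show ?case by (simp add: mult.assoc[symmetric])
qed

lemma elem_sym_fps:
  assumes "finite B"
  shows "Abs_fps (elem_sym w B) = (\<Prod>b\<in>B. 1 + fps_const (w b) * fps_X)"
proof (rule fps_ext)
  fix n
  have "(\<Prod>b\<in>B. 1 + fps_const (w b) * fps_X) = (\<Prod>b\<in>B. fps_const (w b) * fps_X + 1)"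
    by (simp add: add.commute)
  also have "\<dots> = (\<Sum>S\<in>Pow B. fps_const (\<Prod>b\<in>S. w b) * fps_X ^ card S)"
    using assms by (simp add: prod_add prod.distrib fps_const_prod)
  finally have "(\<Prod>b\<in>B. 1 + fps_const (w b) * fps_X)
      = (\<Sum>S\<in>Pow B. fps_const (\<Prod>b\<in>S. w b) * fps_X ^ card S)" .
  then have "(\<Prod>b\<in>B. 1 + fps_const (w b) * fps_X) $ n
      = (\<Sum>S\<in>Pow B. if card S = n then \<Prod>b\<in>S. w b else 0)"
    by (simp add: fps_sum_nth eq_commute[of n] if_distrib cong: if_cong)
  also have "\<dots> = elem_sym w B n"
    using assms by (simp add: sum.If_cases elem_sym_def Int_def)
  finally show "Abs_fps (elem_sym w B) $ n = (\<Prod>b\<in>B. 1 + fps_const (w b) * fps_X) $ n"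
    by simp
qed

lemma boxes_eq_Sigma: "boxes xs = Sigma {1..length xs} (\<lambda>i. {1..part_nth xs i})"
  by (auto simp: boxes_def part_nth_def split: if_splits)

lemma finite_boxes: "finite (boxes xs)"
  unfolding boxes_eq_Sigma by auto

lemma card_boxes: "real (card (boxes xs)) = energy xs"
proof -
  have "card (boxes xs) = (\<Sum>i=1..length xs. part_nth xs i)"
    unfolding boxes_eq_Sigma by (simp add: card_SigmaI)
  also have "\<dots> = (\<Sum>i<length xs. xs ! i)"
    by (simp add: sum.atLeast1_atMost_eq part_nth_def)
  also have "\<dots> = sum_list xs"
    by (simp add: sum_list_sum_nth atLeast0LessThan)
  finally show ?thesis by (simp add: energy_def)
qed

lemma h_cr_eq_complete_hom: "h_cr xs = complete_hom content (boxes xs)"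
  by (simp add: fun_eq_iff h_cr_def complete_hom_def)

lemma sigma_cr_eq_elem_sym: "sigma_cr xs = elem_sym content (boxes xs)"
  by (simp add: fun_eq_iff sigma_cr_def elem_sym_def)

lemma zeta_fps_mult_exp: "zeta_fps * fps_exp a = fps_exp (a + 1/2) - fps_exp (a - 1/2)"
proof -
  have "fps_exp (a - 1/2) = fps_exp a * fps_exp (- (1/2))"
    by (simp flip: fps_exp_add_mult)
  then show ?thesis
    unfolding zeta_fps_def by (simp add: fps_exp_add_mult algebra_simps)
qed

lemma zeta_fps_nonzero: "zeta_fps \<noteq> 0"
proof
  assume "zeta_fps = 0"
  then have "zeta_fps $ 1 = 0" by simp
  then show False unfolding zeta_fps_def by simp
qed

lemma zeta_fps_mult_row_sum:
  "zeta_fps * (\<Sum>j=1..m. fps_exp (real j - real i))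
     = fps_exp (real m - real i + 1/2) - fps_exp (- real i + 1/2)"
  by (induction m) (simp_all add: distrib_left zeta_fps_mult_exp algebra_simps)

lemma casimir0_eq: "casimir0 xs = zeta_fps * (\<Sum>b\<in>boxes xs. fps_exp (content b))"
proof -
  have "casimir0 xs = (\<Sum>i=1..length xs. zeta_fps * (\<Sum>j=1..part_nth xs i. fps_exp (real j - real i)))"
    unfolding casimir0_def zeta_fps_mult_row_sum ..
  also have "\<dots> = zeta_fps * (\<Sum>b\<in>boxes xs. fps_exp (content b))"
    unfolding boxes_eq_Sigma sum_distrib_left[symmetric]
    by (simp add: sum.Sigma content_def case_prod_unfold)
  finally show ?thesis .
qed

lemma F_ser_eq: "F_ser xs = (\<Sum>b\<in>boxes xs. fps_exp (content b)) - fps_const (real (card (boxes xs)))"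
  unfolding F_ser_def casimir0_eq card_boxes using zeta_fps_nonzero by simp

lemma Dp_eq_F_ser: "Dp xs = F_ser xs"
proof (rule fps_ext)
  fix k
  show "Dp xs $ k = F_ser xs $ k"
    by (cases k) (simp_all add: F_ser_eq Dp_def fps_sum_nth p_cr_def sum_divide_distrib algebra_simps)
qed

lemma F_ser_nth_Suc: "F_ser xs $ Suc n = p_cr xs (Suc n) / fact (Suc n)"
  by (simp flip: Dp_eq_F_ser add: Dp_def)

lemma zdz_pow_log_Suc: "zdz_pow_log c (Suc k) = fps_const (c ^ Suc k * fact k) * fps_X ^ Suc k"
proof (induction k)
  case (Suc k)
  have "zdz_pow_log c (Suc (Suc k)) = zdz c (zdz_pow_log c (Suc k))"
    by (simp add: zdz_pow_log_def)
  also have "\<dots> = (fps_const c * fps_const (c ^ Suc k * fact k * of_nat (Suc k))) * (fps_X ^ 2 * fps_X ^ k)"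
    unfolding Suc zdz_def fps_deriv_monom by (simp only: mult_ac)
  also have "\<dots> = fps_const (c ^ Suc (Suc k) * fact (Suc k)) * fps_X ^ Suc (Suc k)"
    by (simp only: fps_const_mult power_add[symmetric]) (simp add: algebra_simps)
  finally show ?case .
qed (simp add: zdz_pow_log_def)

lemma log_series_eq:
  "fps_series (\<lambda>k. if k = 0 then 0 else fps_const (F_ser xs $ k) * zdz_pow_log c k)
     = - (\<Sum>b\<in>boxes xs. fps_ln 1 oo (fps_const (- (c * content b)) * fps_X))"
proof -
  have "(if k = 0 then 0 else fps_const (F_ser xs $ k) * zdz_pow_log c k)
      = fps_const (if k = 0 then 0 else F_ser xs $ k * c ^ k * fact (k - 1)) * fps_X ^ k" for k
    by (cases k) (simp_all add: zdz_pow_log_Suc mult.assoc flip: fps_const_mult)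
  then have "fps_series (\<lambda>k. if k = 0 then 0 else fps_const (F_ser xs $ k) * zdz_pow_log c k)
      = Abs_fps (\<lambda>k. if k = 0 then 0 else F_ser xs $ k * c ^ k * fact (k - 1))"
    by (simp add: fps_series_monomials)
  also have "\<dots> = - (\<Sum>b\<in>boxes xs. fps_ln 1 oo (fps_const (- (c * content b)) * fps_X))"
  proof (rule fps_ext)
    fix n
    show "Abs_fps (\<lambda>k. if k = 0 then 0 else F_ser xs $ k * c ^ k * fact (k - 1)) $ n
        = (- (\<Sum>b\<in>boxes xs. fps_ln 1 oo (fps_const (- (c * content b)) * fps_X))) $ n"
    proof (cases n)
      case (Suc m)
      have "(- (\<Sum>b\<in>boxes xs. fps_ln 1 oo (fps_const (- (c * content b)) * fps_X))) $ n
          = c ^ n * p_cr xs n / n"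
        unfolding Suc fps_neg_nth fps_sum_nth fps_ln_linear_nth
        by (simp add: p_cr_def power_mult_distrib sum_distrib_left sum_divide_distrib sum_negf mult_ac)
      moreover have "fact n = real n * fact m"
        using Suc by simp
      ultimately show ?thesis
        using Suc by (simp add: F_ser_nth_Suc)
    qed (simp add: fps_sum_nth)
  qed
  finally show ?thesis .
qed

theorem proposition5p1:
  assumes "is_partition xs"
  shows "Dp xs = F_ser xs
    \<and> F_ser xs = casimir0 xs / zeta_fps - fps_const (energy xs)
    \<and> Dh xs = fps_expf (fps_series (\<lambda>k. if k = 0 then 0
                 else fps_const (fps_nth (F_ser xs) k) * zdz_pow_log 1 k))
    \<and> Dsigma xs = fps_expf (- fps_series (\<lambda>k. if k = 0 then 0
                 else fps_const (fps_nth (F_ser xs) k) * zdz_pow_log (-1) k))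
    \<and> Dh xs = inverse (Dsigma xs oo (- fps_X))"
proof -
  let ?L = "\<lambda>a. fps_ln 1 oo (fps_const a * fps_X)"
  let ?Q = "\<Prod>b\<in>boxes xs. 1 - fps_const (content b) * fps_X"
  have Dh_Q: "inverse ?Q = Dh xs"
    using complete_hom_fps[OF finite_boxes, of content xs]
    by (intro fps_inverse_unique) (simp add: Dh_def h_cr_eq_complete_hom mult.commute)
  have "fps_expf (\<Sum>b\<in>boxes xs. - ?L (- content b)) * ?Q = 1"
    by (simp add: fps_expf_sum prod.distrib[symmetric] fps_expf_neg_ln_linear)
  then have Dh_exp: "inverse ?Q = fps_expf (\<Sum>b\<in>boxes xs. - ?L (- content b))"
    by (intro fps_inverse_unique) (simp add: mult.commute)
  have Dsigma_prod: "Dsigma xs = (\<Prod>b\<in>boxes xs. 1 + fps_const (content b) * fps_X)"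
    using elem_sym_fps[OF finite_boxes, of content xs]
    by (simp add: Dsigma_def sigma_cr_eq_elem_sym)
  also have "\<dots> = fps_expf (\<Sum>b\<in>boxes xs. ?L (content b))"
    by (simp add: fps_expf_sum fps_expf_ln_linear)
  finally have Dsigma_exp: "Dsigma xs = fps_expf (\<Sum>b\<in>boxes xs. ?L (content b))" .
  have "Dsigma xs oo - fps_X = ?Q"
    unfolding Dsigma_prod by (simp add: fps_compose_prod_distrib one_plus_linear_compose_uminus)
  then show ?thesis
    using Dp_eq_F_ser Dh_Q Dh_exp Dsigma_exp
    by (simp add: F_ser_def log_series_eq sum_negf)
qed

end
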